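(* Let $P$ be a finite poset, $\epsilon\in\{1,-1\}$, $n\ge2$ an integer and $\xi\in S^{(n\epsilon)}$. Define $\xi_1\in\mathbb Z^{P^-}$ by $\xi_1(w)=\lfloor \xi(w)/n\rfloor$ if $w$ is a maximal element of $P$ or $w=-\infty$, and $\xi_1(w)=\lfloor \xi^{+\uparrow}(w)/n\rfloor-\lfloor \xi^{+\prime\uparrow}(w)/n\rfloor$ otherwise. Then (a) $\xi_1^{+\uparrow}(z)=\lfloor \xi^{+\uparrow}(z)/n\rfloor$ for every $z\in P$, and $\max\{\xi_1^+(C)\}=\lfloor \tfrac1n\max\{\xi^+(C)\}\rfloor$, maxima over maximal chains $C$ of $P$; (b) $\xi_1\in S^{(\epsilon)}$.
   Context: $P^-=P\cup\{-\infty\}$, $P^+=P\cup\{+\infty\}$, with $-\infty<z<+\infty$ for all $z\in P$; $a\lessdot b$ means $b$ covers $a$. $\xi^+(B)=\sum_{b\in B}\xi(b)$. For $z\in P$: $\xi^{+\uparrow}(z)=\max\sum_{\ell=0}^s\xi(z_\ell)$ and $\xi^{+\prime\uparrow}(z)=\max\sum_{\ell=1}^s\xi(z_\ell)$ (empty sum $0$), maxima over all $z=z_0\lessdot z_1\lessdot\cdots\lessdot z_s\lessdot+\infty$ in $P^+$. For $m\in\mathbb Z$, $S^{(m)}=\{\xi\in\mathbb Z^{P^-}:\xi(x)\ge m\ \forall x\in P,\ \xi(-\infty)\ge\xi^+(C)+m$ for every maximal chain $C$ of $P\}$. *)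

theory Defs
  imports Main
begin

(* A finite poset P is modelled as a finite subset P of an ordered type, with the
   induced order.  Elements of P^- are  'a option :  None = -infinity, Some x = x. *)

definition pos_covers :: "'a::order set \<Rightarrow> 'a \<Rightarrow> 'a \<Rightarrow> bool" where
  "pos_covers P a b \<longleftrightarrow> a \<in> P \<and> b \<in> P \<and> a < b \<and> \<not> (\<exists>c\<in>P. a < c \<and> c < b)"

definition pos_maximal :: "'a::order set \<Rightarrow> 'a \<Rightarrow> bool" where
  "pos_maximal P x \<longleftrightarrow> x \<in> P \<and> \<not> (\<exists>y\<in>P. x < y)"

definition pos_upchains :: "'a::order set \<Rightarrow> 'a \<Rightarrow> 'a list set" where
  "pos_upchains P z = {zs. zs \<noteq> [] \<and> hd zs = z \<and> set zs \<subseteq> P \<and>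
      (\<forall>i. Suc i < length zs \<longrightarrow> pos_covers P (zs ! i) (zs ! Suc i)) \<and>
      pos_maximal P (last zs)}"

definition pos_up_sum :: "'a::order set \<Rightarrow> ('a option \<Rightarrow> int) \<Rightarrow> 'a \<Rightarrow> int" where
  "pos_up_sum P \<xi> z = Max ((\<lambda>zs. \<Sum>x\<leftarrow>zs. \<xi> (Some x)) ` pos_upchains P z)"

definition pos_up_sum' :: "'a::order set \<Rightarrow> ('a option \<Rightarrow> int) \<Rightarrow> 'a \<Rightarrow> int" where
  "pos_up_sum' P \<xi> z = Max ((\<lambda>zs. \<Sum>x\<leftarrow>tl zs. \<xi> (Some x)) ` pos_upchains P z)"

definition pos_chain :: "'a::order set \<Rightarrow> 'a set \<Rightarrow> bool" where
  "pos_chain P C \<longleftrightarrow> C \<subseteq> P \<and> (\<forall>x\<in>C. \<forall>y\<in>C. x \<le> y \<or> y \<le> x)"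

definition pos_maximal_chain :: "'a::order set \<Rightarrow> 'a set \<Rightarrow> bool" where
  "pos_maximal_chain P C \<longleftrightarrow> pos_chain P C \<and> (\<forall>D. pos_chain P D \<and> C \<subseteq> D \<longrightarrow> D = C)"

definition pos_chain_sum :: "('a option \<Rightarrow> int) \<Rightarrow> 'a set \<Rightarrow> int" where
  "pos_chain_sum \<xi> C = (\<Sum>x\<in>C. \<xi> (Some x))"

definition pos_S :: "'a::order set \<Rightarrow> int \<Rightarrow> ('a option \<Rightarrow> int) set" where
  "pos_S P m = {\<xi>. (\<forall>x\<in>P. \<xi> (Some x) \<ge> m) \<and>
      (\<forall>C. pos_maximal_chain P C \<longrightarrow> \<xi> None \<ge> pos_chain_sum \<xi> C + m)}"

end

theory Submission
  imports Defs
begin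

text \<open>
  Write \<open>U(z) = xi^{+up}(z)\<close> and \<open>U'(z) = xi^{+'up}(z)\<close>. Every saturated chain starting at
  \<open>z\<close> is \<open>z\<close> followed by one starting at a cover of \<open>z\<close>, so \<open>U(z) = xi(z) + U'(z)\<close>, where
  \<open>U'(z)\<close> is the maximum of \<open>U\<close> over the covers of \<open>z\<close> (and \<open>0\<close> at maximal \<open>z\<close>).
  Hence \<open>xi_1(z) = \<lfloor>U(z)/n\<rfloor> - \<lfloor>U'(z)/n\<rfloor>\<close> on all of \<open>P\<close>, and since \<open>\<lfloor>-/n\<rfloor>\<close> is
  monotone it commutes with maxima, so a downward induction telescopes to
  \<open>xi_1^{+up} = \<lfloor>U/n\<rfloor>\<close>. The maximal chains of \<open>P\<close> are exactly the saturated chains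
  from a minimal element, so the maximal chain sum is the maximum of \<open>U\<close> over minimal
  elements and commutes with \<open>\<lfloor>-/n\<rfloor>\<close> as well.
\<close>

lemma Max_UN:
  fixes A :: "'i \<Rightarrow> 'a::linorder set"
  assumes "finite I" "I \<noteq> {}" "\<And>i. i \<in> I \<Longrightarrow> finite (A i)" "\<And>i. i \<in> I \<Longrightarrow> A i \<noteq> {}"
  shows "Max (\<Union>i\<in>I. A i) = Max ((\<lambda>i. Max (A i)) ` I)"
proof (rule Max_eqI)
  show "finite (\<Union>i\<in>I. A i)" using assms(1,3) by simp
  fix x assume "x \<in> (\<Union>i\<in>I. A i)"
  then obtain i where "i \<in> I" "x \<in> A i" by blast
  then have "x \<le> Max (A i)" using assms(3) by simp
  also have "\<dots> \<le> Max ((\<lambda>i. Max (A i)) ` I)" using assms(1) \<open>i \<in> I\<close> by simp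
  finally show "x \<le> Max ((\<lambda>i. Max (A i)) ` I)" .
next
  have "Max ((\<lambda>i. Max (A i)) ` I) \<in> (\<lambda>i. Max (A i)) ` I"
    using assms(1,2) by (intro Max_in) auto
  then obtain i where "i \<in> I" "Max ((\<lambda>i. Max (A i)) ` I) = Max (A i)" by blast
  moreover have "Max (A i) \<in> A i" using assms(3,4) \<open>i \<in> I\<close> by (intro Max_in)
  ultimately show "Max ((\<lambda>i. Max (A i)) ` I) \<in> (\<Union>i\<in>I. A i)" by auto
qed

lemma Max_div_commute:
  fixes n :: int
  assumes "finite A" "A \<noteq> {}" "0 < n"
  shows "Max ((\<lambda>x. x div n) ` A) = Max A div n"
  using mono_Max_commute[of "\<lambda>x. x div n" A] assms by (simp add: mono_def zdiv_mono1)

lemma div_add_div_le: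
  fixes a b n :: int
  assumes "0 < n"
  shows "a div n + b div n \<le> (a + b) div n"
  using div_add1_eq[of a b n] assms by (simp add: pos_imp_zdiv_nonneg_iff)

lemma sorted_wrt_less_imp_distinct: "sorted_wrt (<) xs \<Longrightarrow> distinct (xs :: 'a::order list)"
  by (induction xs) auto

lemma sorted_wrt_less_comparable:
  fixes xs :: "'a::order list"
  shows "sorted_wrt (<) xs \<Longrightarrow> x \<in> set xs \<Longrightarrow> y \<in> set xs \<Longrightarrow> x \<le> y \<or> y \<le> x"
  by (induction xs) (auto simp: less_imp_le)

lemma finite_poset_induct_down [consumes 2, case_names step]:
  fixes P :: "'a::order set"
  assumes "finite P" "z \<in> P"
    and step: "\<And>z. z \<in> P \<Longrightarrow> (\<And>w. w \<in> P \<Longrightarrow> z < w \<Longrightarrow> Q w) \<Longrightarrow> Q z"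
  shows "Q z"
  using assms(2)
proof (induction z rule: measure_induct_rule[where f = "\<lambda>z. card {y\<in>P. z < y}"])
  case (less z)
  show ?case
  proof (rule step[OF less.prems])
    fix w assume "w \<in> P" "z < w"
    have "{y\<in>P. w < y} \<subseteq> {y\<in>P. z < y}"
      by (auto intro: less_trans[OF \<open>z < w\<close>])
    moreover have "w \<in> {y\<in>P. z < y} - {y\<in>P. w < y}" using \<open>w \<in> P\<close> \<open>z < w\<close> by simp
    ultimately have "{y\<in>P. w < y} \<subset> {y\<in>P. z < y}" by blast
    then have "card {y\<in>P. w < y} < card {y\<in>P. z < y}"
      using assms(1) by (simp add: psubset_card_mono)
    then show "Q w" using less.IH \<open>w \<in> P\<close> by blast
  qed
qed

lemma pos_covers_exists:
  assumes "finite P" "z \<in> P" "\<not> pos_maximal P z"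
  obtains w where "pos_covers P z w"
proof -
  have "{y\<in>P. z < y} \<noteq> {}" using assms(2,3) by (auto simp: pos_maximal_def)
  then obtain w where "w \<in> P" "z < w" "\<forall>b\<in>P. z < b \<longrightarrow> b \<le> w \<longrightarrow> w = b"
    using finite_has_minimal[of "{y\<in>P. z < y}"] assms(1) by auto
  then have "pos_covers P z w" using assms(2) by (auto simp: pos_covers_def)
  then show ?thesis by (rule that)
qed

lemma pos_upchains_Cons_iff:
  "zs \<in> pos_upchains P z \<longleftrightarrow> (zs = [z] \<and> pos_maximal P z) \<or>
     (\<exists>w ws. zs = z # ws \<and> pos_covers P z w \<and> ws \<in> pos_upchains P w)"
proof -
  have upchains_eq: "pos_upchains P z = {zs. zs \<noteq> [] \<and> hd zs = z \<and> set zs \<subseteq> P \<and>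
      successively (pos_covers P) zs \<and> pos_maximal P (last zs)}" for z
    unfolding pos_upchains_def successively_conv_nth by simp
  show ?thesis
  proof (cases zs)
    case Nil
    then show ?thesis by (simp add: upchains_eq)
  next
    case (Cons x ws)
    then show ?thesis
    proof (cases ws)
      case Nil
      then show ?thesis using Cons by (auto simp: upchains_eq pos_maximal_def)
    next
      case (Cons y ys)
      then show ?thesis using \<open>zs = x # ws\<close> by (auto simp: upchains_eq pos_covers_def)
    qed
  qed
qed

lemma pos_upchainsD:
  assumes "zs \<in> pos_upchains P z"
  shows "zs = z # tl zs" "set zs \<subseteq> P" "sorted_wrt (<) zs"
proof -
  show "zs = z # tl zs" "set zs \<subseteq> P" using assms by (auto simp: pos_upchains_def)
  have "successively (pos_covers P) zs"
    using assms by (simp add: pos_upchains_def successively_conv_nth)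
  then have "successively (<) zs" by (rule successively_mono) (simp add: pos_covers_def)
  then show "sorted_wrt (<) zs" by (simp add: successively_conv_sorted_wrt)
qed

lemma pos_upchains_finite: "finite P \<Longrightarrow> finite (pos_upchains P z)"
  by (rule finite_subset[OF _ finite_subset_distinct[of P]])
    (auto dest: pos_upchainsD sorted_wrt_less_imp_distinct)

lemma pos_upchains_nonempty:
  assumes "finite P" "z \<in> P"
  shows "pos_upchains P z \<noteq> {}"
  using assms
proof (induction z rule: finite_poset_induct_down)
  case (step z)
  show ?case
  proof (cases "pos_maximal P z")
    case True
    then show ?thesis using pos_upchains_Cons_iff[of "[z]" P z] by blast
  next
    case False
    then obtain w where w: "pos_covers P z w" using pos_covers_exists assms(1) step(1) by blast
    then obtain ws where "ws \<in> pos_upchains P w" using step(2) by (force simp: pos_covers_def)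
    then have "z # ws \<in> pos_upchains P z" using pos_upchains_Cons_iff[of "z # ws" P z] w by blast
    then show ?thesis by blast
  qed
qed

lemma pos_up_sum_ge:
  "finite P \<Longrightarrow> zs \<in> pos_upchains P z \<Longrightarrow> (\<Sum>x\<leftarrow>zs. \<eta> (Some x)) \<le> pos_up_sum P \<eta> z"
  unfolding pos_up_sum_def by (rule Max_ge) (auto simp: pos_upchains_finite)

lemma pos_up_sum_attained:
  assumes "finite P" "z \<in> P"
  obtains zs where "zs \<in> pos_upchains P z" "(\<Sum>x\<leftarrow>zs. \<eta> (Some x)) = pos_up_sum P \<eta> z"
proof -
  have "pos_up_sum P \<eta> z \<in> (\<lambda>zs. \<Sum>x\<leftarrow>zs. \<eta> (Some x)) ` pos_upchains P z"
    unfolding pos_up_sum_def using assms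
    by (intro Max_in) (auto simp: pos_upchains_finite pos_upchains_nonempty)
  then show ?thesis using that by force
qed

lemma pos_up_sum_eq_add:
  assumes "finite P" "z \<in> P"
  shows "pos_up_sum P \<eta> z = \<eta> (Some z) + pos_up_sum' P \<eta> z"
proof -
  have "(\<lambda>zs. \<Sum>x\<leftarrow>zs. \<eta> (Some x)) ` pos_upchains P z =
        (\<lambda>zs. (\<Sum>x\<leftarrow>tl zs. \<eta> (Some x)) + \<eta> (Some z)) ` pos_upchains P z"
  proof (rule image_cong[OF refl])
    fix zs assume "zs \<in> pos_upchains P z"
    then obtain ws where "zs = z # ws" using pos_upchainsD(1) by blast
    then show "(\<Sum>x\<leftarrow>zs. \<eta> (Some x)) = (\<Sum>x\<leftarrow>tl zs. \<eta> (Some x)) + \<eta> (Some z)" by simp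
  qed
  then show ?thesis
    unfolding pos_up_sum_def pos_up_sum'_def using assms
    by (simp add: Max_add_commute pos_upchains_finite pos_upchains_nonempty)
qed

lemma pos_up_sum'_maximal:
  assumes "pos_maximal P z"
  shows "pos_up_sum' P \<eta> z = 0"
proof -
  have "pos_upchains P z = {[z]}"
    using assms pos_upchains_Cons_iff[of _ P z] by (auto simp: pos_maximal_def pos_covers_def)
  then show ?thesis by (simp add: pos_up_sum'_def)
qed

lemma pos_up_sum'_eq_Max_covers:
  assumes "finite P" "z \<in> P" "\<not> pos_maximal P z"
  shows "pos_up_sum' P \<eta> z = Max (pos_up_sum P \<eta> ` {w. pos_covers P z w})"
    (is "_ = Max (_ ` ?W)")
  unfolding pos_up_sum'_def
proof (rule Max_eqI)
  have "finite ?W" by (rule finite_subset[OF _ assms(1)]) (auto simp: pos_covers_def)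
  moreover obtain w where w: "pos_covers P z w" using pos_covers_exists[OF assms] .
  ultimately have "Max (pos_up_sum P \<eta> ` ?W) \<in> pos_up_sum P \<eta> ` ?W" by (intro Max_in) auto
  then obtain w0 where w0: "pos_covers P z w0" "pos_up_sum P \<eta> w0 = Max (pos_up_sum P \<eta> ` ?W)"
    by auto
  have "w0 \<in> P" using w0(1) by (simp add: pos_covers_def)
  then obtain ws0 where ws0: "ws0 \<in> pos_upchains P w0" "(\<Sum>x\<leftarrow>ws0. \<eta> (Some x)) = pos_up_sum P \<eta> w0"
    by (rule pos_up_sum_attained[OF assms(1)])
  have "z # ws0 \<in> pos_upchains P z" using pos_upchains_Cons_iff[of "z # ws0"] w0(1) ws0(1) by blast
  then show "Max (pos_up_sum P \<eta> ` ?W) \<in> (\<lambda>zs. \<Sum>x\<leftarrow>tl zs. \<eta> (Some x)) ` pos_upchains P z"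
    using ws0(2) w0(2) by force
next
  fix s assume "s \<in> (\<lambda>zs. \<Sum>x\<leftarrow>tl zs. \<eta> (Some x)) ` pos_upchains P z"
  then obtain w ws where ws: "s = (\<Sum>x\<leftarrow>ws. \<eta> (Some x))" "pos_covers P z w" "ws \<in> pos_upchains P w"
    using pos_upchains_Cons_iff[of _ P z] assms(3) by force
  have "s \<le> pos_up_sum P \<eta> w" unfolding ws(1) by (rule pos_up_sum_ge[OF assms(1) ws(3)])
  also have "\<dots> \<le> Max (pos_up_sum P \<eta> ` ?W)"
    using ws(2) by (intro Max_ge) (auto intro: finite_subset[OF _ assms(1)] simp: pos_covers_def)
  finally show "s \<le> Max (pos_up_sum P \<eta> ` ?W)" .
qed (simp add: assms(1) pos_upchains_finite)

lemma pos_upchains_chain_above: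
  assumes "zs \<in> pos_upchains P z"
  shows "pos_chain {y\<in>P. z \<le> y} (set zs)"
proof -
  obtain ws where zs: "zs = z # ws" using pos_upchainsD(1)[OF assms] by blast
  have sorted: "sorted_wrt (<) zs" and "set zs \<subseteq> P" using pos_upchainsD[OF assms] by auto
  moreover have "\<forall>x\<in>set zs. z \<le> x" using sorted unfolding zs by (auto simp: less_imp_le)
  ultimately show ?thesis
    unfolding pos_chain_def using sorted_wrt_less_comparable[OF sorted] by blast
qed

lemma pos_maximal_chain_absorb:
  assumes "pos_maximal_chain Q C" "x \<in> Q" "\<forall>c\<in>C. c \<le> x \<or> x \<le> c"
  shows "x \<in> C"
proof -
  have "pos_chain Q (insert x C)"
    using assms by (auto simp: pos_maximal_chain_def pos_chain_def)
  moreover have "\<forall>D. pos_chain Q D \<and> C \<subseteq> D \<longrightarrow> D = C"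
    using assms(1) by (simp add: pos_maximal_chain_def)
  ultimately have "insert x C = C" by blast
  then show ?thesis by blast
qed

lemma pos_upchains_maximal_chain_above:
  "zs \<in> pos_upchains P z \<Longrightarrow> pos_maximal_chain {y\<in>P. z \<le> y} (set zs)"
proof (induction zs arbitrary: z)
  case Nil
  then show ?case by (simp add: pos_upchains_def)
next
  case (Cons x ws)
  have "d \<in> set (x # ws)" if D: "pos_chain {y\<in>P. z \<le> y} D" "set (x # ws) \<subseteq> D" "d \<in> D" for D d
  proof -
    have d: "d \<in> P" "z \<le> d" "\<forall>c\<in>D. c \<le> d \<or> d \<le> c" using D by (auto simp: pos_chain_def)
    from Cons.prems consider "x # ws = [z]" "pos_maximal P z"
      | w where "x = z" "pos_covers P z w" "ws \<in> pos_upchains P w"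
      unfolding pos_upchains_Cons_iff[of "x # ws"] by auto
    then show ?thesis
    proof cases
      case 1
      then show ?thesis using d by (auto simp: pos_maximal_def order.order_iff_strict)
    next
      case (2 w)
      have "w \<in> set ws" using pos_upchainsD(1)[OF 2(3)] by (metis list.set_intros(1))
      show ?thesis
      proof (cases "w \<le> d")
        case True
        have "d \<in> set ws"
          using pos_maximal_chain_absorb[OF Cons.IH[OF 2(3)]] True d D(2) by auto
        then show ?thesis by simp
      next
        case False
        then have "d < w" using d(3) D(2) \<open>w \<in> set ws\<close> by (auto simp: order.order_iff_strict)
        then have "d = z" using 2(2) d(1,2) by (auto simp: pos_covers_def order.order_iff_strict)
        then show ?thesis using 2(1) by simp
      qed
    qed
  qed
  then show ?case
    using pos_upchains_chain_above[OF Cons.prems] unfolding pos_maximal_chain_def by blast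
qed

lemma pos_chain_least:
  assumes "pos_chain Q C" "finite C" "C \<noteq> {}"
  obtains z where "z \<in> C" "\<forall>c\<in>C. z \<le> c"
proof -
  obtain m where m: "m \<in> C" "\<forall>b\<in>C. b \<le> m \<longrightarrow> m = b"
    using finite_has_minimal[OF assms(2,3)] by blast
  have "m \<le> c" if "c \<in> C" for c
    using assms(1) m that by (auto simp: pos_chain_def)
  then show ?thesis using m(1) that by blast
qed

lemma pos_maximal_chain_above_mem:
  assumes "z \<in> P" "pos_maximal_chain {y\<in>P. z \<le> y} C"
  shows "z \<in> C"
proof (rule pos_maximal_chain_absorb[OF assms(2)])
  show "z \<in> {y\<in>P. z \<le> y}" using assms(1) by simp
  show "\<forall>c\<in>C. c \<le> z \<or> z \<le> c" using assms(2) by (auto simp: pos_maximal_chain_def pos_chain_def)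
qed

lemma pos_maximal_chain_above_tail:
  assumes "finite P" "z \<in> P" "pos_maximal_chain {y\<in>P. z \<le> y} C" "C \<noteq> {z}"
  obtains w where "pos_covers P z w" "pos_maximal_chain {y\<in>P. w \<le> y} (C - {z})"
proof -
  have C: "pos_chain {y\<in>P. z \<le> y} C" using assms(3) by (simp add: pos_maximal_chain_def)
  have "z \<in> C" using pos_maximal_chain_above_mem[OF assms(2,3)] .
  have "pos_chain {y\<in>P. z \<le> y} (C - {z})" using C by (auto simp: pos_chain_def)
  moreover have "finite (C - {z})" using C assms(1) by (auto simp: pos_chain_def intro: finite_subset)
  moreover have "C - {z} \<noteq> {}" using assms(4) \<open>z \<in> C\<close> by blast
  ultimately obtain w where w: "w \<in> C - {z}" "\<forall>c\<in>C - {z}. w \<le> c" by (rule pos_chain_least)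
  have "z < w" using w C by (auto simp: pos_chain_def order.order_iff_strict)
  have no_between: "\<not> (z < c \<and> c < w)" if "c \<in> P" for c
  proof
    assume c: "z < c \<and> c < w"
    have "\<forall>x\<in>C. x \<le> c \<or> c \<le> x"
      using c w by (auto intro: less_imp_le order.trans[OF less_imp_le[of c w]])
    then have "c \<in> C" using pos_maximal_chain_absorb[OF assms(3)] c that by (simp add: less_imp_le)
    then have "w \<le> c" using c w(2) by auto
    then show False using c by auto
  qed
  have cov: "pos_covers P z w"
    using \<open>z < w\<close> no_between w C assms(2) by (auto simp: pos_covers_def pos_chain_def)
  have "pos_maximal_chain {y\<in>P. w \<le> y} (C - {z})"
    unfolding pos_maximal_chain_def
  proof (intro conjI allI impI)
    show "pos_chain {y\<in>P. w \<le> y} (C - {z})" using C w by (auto simp: pos_chain_def)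
    fix D assume D: "pos_chain {y\<in>P. w \<le> y} D \<and> C - {z} \<subseteq> D"
    have "pos_chain {y\<in>P. z \<le> y} (insert z D)"
      using D \<open>z < w\<close> assms(2) by (auto simp: pos_chain_def intro: order.trans[OF less_imp_le[OF \<open>z < w\<close>]])
    moreover have "C \<subseteq> insert z D" using D by auto
    ultimately have "insert z D = C" using assms(3) by (simp add: pos_maximal_chain_def)
    moreover have "z \<notin> D" using D \<open>z < w\<close> by (auto simp: pos_chain_def)
    ultimately show "D = C - {z}" by auto
  qed
  with cov show ?thesis by (rule that)
qed

lemma pos_upchain_of_maximal_chain_above:
  assumes "finite P" "z \<in> P" "pos_maximal_chain {y\<in>P. z \<le> y} C"
  shows "\<exists>zs\<in>pos_upchains P z. set zs = C"
  using assms(2,3)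
proof (induction "card C" arbitrary: C z rule: less_induct)
  case less
  show ?case
  proof (cases "C = {z}")
    case True
    have "\<not> z < y" if "y \<in> P" for y
    proof
      assume "z < y"
      then have "y \<in> C"
        using pos_maximal_chain_absorb[OF less.prems(2)] that True by (auto simp: less_imp_le)
      then show False using True \<open>z < y\<close> by simp
    qed
    then have "[z] \<in> pos_upchains P z"
      using pos_upchains_Cons_iff[of "[z]" P z] less.prems(1) by (auto simp: pos_maximal_def)
    then show ?thesis using True by force
  next
    case False
    obtain w where w: "pos_covers P z w" "pos_maximal_chain {y\<in>P. w \<le> y} (C - {z})"
      using pos_maximal_chain_above_tail[OF assms(1) less.prems False] .
    have "z \<in> C" by (rule pos_maximal_chain_above_mem[OF less.prems])
    moreover have "finite C"
      using less.prems(2) assms(1)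
      by (auto simp: pos_maximal_chain_def pos_chain_def intro: finite_subset)
    ultimately have "card (C - {z}) < card C" by (metis card_Diff1_less)
    moreover have "w \<in> P" using w(1) by (simp add: pos_covers_def)
    ultimately obtain ws where ws: "ws \<in> pos_upchains P w" "set ws = C - {z}"
      using less.hyps w(2) by blast
    then have "z # ws \<in> pos_upchains P z" using pos_upchains_Cons_iff[of "z # ws"] w(1) by blast
    moreover have "set (z # ws) = C" using ws(2) \<open>z \<in> C\<close> by auto
    ultimately show ?thesis by blast
  qed
qed

definition pos_minimal :: "'a::order set \<Rightarrow> 'a \<Rightarrow> bool" where
  "pos_minimal P z \<longleftrightarrow> z \<in> P \<and> \<not> (\<exists>y\<in>P. y < z)"

lemma pos_minimal_exists:
  assumes "finite P" "P \<noteq> {}"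
  obtains z where "pos_minimal P z"
proof -
  obtain m where "m \<in> P" "\<forall>b\<in>P. b \<le> m \<longrightarrow> m = b" using finite_has_minimal[OF assms] by blast
  then have "pos_minimal P m" by (auto simp: pos_minimal_def less_le_not_le)
  then show ?thesis by (rule that)
qed

lemma pos_maximal_chain_above_least:
  assumes "finite P" "P \<noteq> {}" "pos_maximal_chain P C"
  obtains z where "pos_minimal P z" "pos_maximal_chain {y\<in>P. z \<le> y} C"
proof -
  have C: "pos_chain P C" using assms(3) by (simp add: pos_maximal_chain_def)
  have "C \<noteq> {}"
  proof
    assume "C = {}"
    obtain x where "x \<in> P" using assms(2) by blast
    then have "x \<in> C" using pos_maximal_chain_absorb[OF assms(3)] \<open>C = {}\<close> by simp
    then show False using \<open>C = {}\<close> by simp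
  qed
  moreover have "finite C" using C assms(1) by (auto simp: pos_chain_def intro: finite_subset)
  ultimately obtain z where z: "z \<in> C" "\<forall>c\<in>C. z \<le> c" using pos_chain_least[OF C] by blast
  have "\<not> y < z" if "y \<in> P" for y
  proof
    assume "y < z"
    then have "\<forall>c\<in>C. y \<le> c" using z(2) by (auto intro: order.trans less_imp_le)
    then have "y \<in> C" using pos_maximal_chain_absorb[OF assms(3) that] by blast
    then show False using z(2) \<open>y < z\<close> by auto
  qed
  then have "pos_minimal P z" using z(1) C by (auto simp: pos_minimal_def pos_chain_def)
  moreover have "pos_maximal_chain {y\<in>P. z \<le> y} C"
    unfolding pos_maximal_chain_def
  proof (intro conjI allI impI)
    show "pos_chain {y\<in>P. z \<le> y} C" using C z(2) by (auto simp: pos_chain_def)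
    fix D assume "pos_chain {y\<in>P. z \<le> y} D \<and> C \<subseteq> D"
    then have "pos_chain P D \<and> C \<subseteq> D" by (auto simp: pos_chain_def)
    then show "D = C" using assms(3) by (simp add: pos_maximal_chain_def)
  qed
  ultimately show ?thesis by (rule that)
qed

lemma pos_maximal_chain_of_above_minimal:
  assumes z: "pos_minimal P z" and max: "pos_maximal_chain {y\<in>P. z \<le> y} C"
  shows "pos_maximal_chain P C"
proof -
  have "z \<in> C" using pos_maximal_chain_above_mem[OF _ max] z by (simp add: pos_minimal_def)
  have "D = C" if D: "pos_chain P D" "C \<subseteq> D" for D
  proof -
    have "z \<le> d" if "d \<in> D" for d
    proof -
      have "d \<in> P" "d \<le> z \<or> z \<le> d" using D \<open>z \<in> C\<close> that by (auto simp: pos_chain_def)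
      then show ?thesis using z by (auto simp: pos_minimal_def order.order_iff_strict)
    qed
    then have "pos_chain {y\<in>P. z \<le> y} D" using D(1) by (auto simp: pos_chain_def)
    then show "D = C" using max D(2) by (simp add: pos_maximal_chain_def)
  qed
  moreover have "pos_chain P C"
    using max unfolding pos_maximal_chain_def pos_chain_def by blast
  ultimately show ?thesis by (simp add: pos_maximal_chain_def)
qed

lemma pos_maximal_chains_eq_upchains:
  assumes "finite P" "P \<noteq> {}"
  shows "{C. pos_maximal_chain P C} = (\<Union>z\<in>{z. pos_minimal P z}. set ` pos_upchains P z)"
proof (intro equalityI subsetI)
  fix C assume "C \<in> {C. pos_maximal_chain P C}"
  then obtain z where z: "pos_minimal P z" "pos_maximal_chain {y\<in>P. z \<le> y} C"
    using pos_maximal_chain_above_least[OF assms] by blast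
  then obtain zs where "zs \<in> pos_upchains P z" "set zs = C"
    using pos_upchain_of_maximal_chain_above[OF assms(1)] by (auto simp: pos_minimal_def)
  then show "C \<in> (\<Union>z\<in>{z. pos_minimal P z}. set ` pos_upchains P z)" using z(1) by blast
next
  fix C assume "C \<in> (\<Union>z\<in>{z. pos_minimal P z}. set ` pos_upchains P z)"
  then obtain z zs where "pos_minimal P z" "zs \<in> pos_upchains P z" "C = set zs" by blast
  then show "C \<in> {C. pos_maximal_chain P C}"
    using pos_maximal_chain_of_above_minimal pos_upchains_maximal_chain_above by blast
qed

lemma pos_chain_sum_upchain:
  "zs \<in> pos_upchains P z \<Longrightarrow> pos_chain_sum \<eta> (set zs) = (\<Sum>x\<leftarrow>zs. \<eta> (Some x))"
  by (simp add: pos_chain_sum_def sum_list_distinct_conv_sum_set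
      pos_upchainsD(3) sorted_wrt_less_imp_distinct)

lemma Max_pos_chain_sum_eq_Max_up_sum:
  assumes "finite P" "P \<noteq> {}"
  shows "Max (pos_chain_sum \<eta> ` {C. pos_maximal_chain P C})
       = Max (pos_up_sum P \<eta> ` {z. pos_minimal P z})"
proof -
  let ?M = "{z. pos_minimal P z}"
  have "pos_chain_sum \<eta> ` {C. pos_maximal_chain P C}
      = (\<Union>z\<in>?M. (\<lambda>zs. \<Sum>x\<leftarrow>zs. \<eta> (Some x)) ` pos_upchains P z)"
    unfolding pos_maximal_chains_eq_upchains[OF assms] image_UN image_image
    using pos_chain_sum_upchain by (intro SUP_cong refl image_cong) blast
  also have "Max \<dots> = Max (pos_up_sum P \<eta> ` ?M)"
  proof (subst Max_UN)
    show "finite ?M" by (rule finite_subset[OF _ assms(1)]) (auto simp: pos_minimal_def)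
    show "?M \<noteq> {}" using pos_minimal_exists[OF assms] by blast
    show "finite ((\<lambda>zs. \<Sum>x\<leftarrow>zs. \<eta> (Some x)) ` pos_upchains P z)"
      and "(\<lambda>zs. \<Sum>x\<leftarrow>zs. \<eta> (Some x)) ` pos_upchains P z \<noteq> {}" if "z \<in> ?M" for z
      using that assms(1) pos_upchains_nonempty[of P z]
      by (auto simp: pos_minimal_def pos_upchains_finite)
  qed (simp add: pos_up_sum_def)
  finally show ?thesis .
qed

lemma pos_up_sum_div:
  fixes \<xi> \<eta> :: "'a::order option \<Rightarrow> int"
  assumes "finite P" "0 < n"
    and \<eta>: "\<forall>x\<in>P. \<eta> (Some x) = pos_up_sum P \<xi> x div n - pos_up_sum' P \<xi> x div n"
    and "z \<in> P"
  shows "pos_up_sum P \<eta> z = pos_up_sum P \<xi> z div n"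
  using assms(1,4)
proof (induction z rule: finite_poset_induct_down)
  case (step z)
  have "pos_up_sum' P \<eta> z = pos_up_sum' P \<xi> z div n"
  proof (cases "pos_maximal P z")
    case True
    then show ?thesis by (simp add: pos_up_sum'_maximal)
  next
    case False
    let ?W = "{w. pos_covers P z w}"
    have "finite ?W" by (rule finite_subset[OF _ assms(1)]) (auto simp: pos_covers_def)
    moreover have "?W \<noteq> {}" using pos_covers_exists[OF assms(1) step(1) False] by blast
    moreover have "pos_up_sum P \<eta> ` ?W = (\<lambda>s. s div n) ` pos_up_sum P \<xi> ` ?W"
      using step(2) by (auto simp: pos_covers_def image_image intro!: image_cong)
    ultimately show ?thesis
      using assms(2) by (simp add: pos_up_sum'_eq_Max_covers[OF assms(1) step(1) False] Max_div_commute)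
  qed
  then show ?case using \<eta> step(1) by (simp add: pos_up_sum_eq_add[OF assms(1) step(1), of \<eta>])
qed

lemma Max_pos_chain_sum_div:
  fixes \<xi> \<eta> :: "'a::order option \<Rightarrow> int"
  assumes "finite P" "0 < n"
    and \<eta>: "\<forall>x\<in>P. \<eta> (Some x) = pos_up_sum P \<xi> x div n - pos_up_sum' P \<xi> x div n"
  shows "Max (pos_chain_sum \<eta> ` {C. pos_maximal_chain P C})
       = Max (pos_chain_sum \<xi> ` {C. pos_maximal_chain P C}) div n"
proof (cases "P = {}")
  case True
  then have "{C. pos_maximal_chain P C} = {{}}"
    by (auto simp: pos_maximal_chain_def pos_chain_def)
  then show ?thesis by (simp add: pos_chain_sum_def)
next
  case False
  let ?M = "{z. pos_minimal P z}"
  have "finite ?M" by (rule finite_subset[OF _ assms(1)]) (auto simp: pos_minimal_def)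
  moreover have "?M \<noteq> {}" using pos_minimal_exists[OF assms(1) False] by blast
  moreover have "pos_up_sum P \<eta> ` ?M = (\<lambda>s. s div n) ` pos_up_sum P \<xi> ` ?M"
    using pos_up_sum_div[OF assms] by (auto simp: pos_minimal_def image_image intro!: image_cong)
  ultimately show ?thesis
    using assms(2) by (simp add: Max_pos_chain_sum_eq_Max_up_sum[OF assms(1) False] Max_div_commute)
qed

lemma pos_S_div:
  fixes \<xi> \<eta> :: "'a::order option \<Rightarrow> int" and m n :: int
  assumes "finite P" "0 < n" "\<xi> \<in> pos_S P (n * m)"
    and \<eta>: "\<forall>x\<in>P. \<eta> (Some x) = pos_up_sum P \<xi> x div n - pos_up_sum' P \<xi> x div n"
    and \<eta>_None: "\<eta> None = \<xi> None div n"
  shows "\<eta> \<in> pos_S P m"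
  unfolding pos_S_def
proof (intro CollectI conjI ballI allI impI)
  fix x assume "x \<in> P"
  have "n * m \<le> \<xi> (Some x)" using assms(3) \<open>x \<in> P\<close> by (simp add: pos_S_def)
  then have "(n * m) div n \<le> \<xi> (Some x) div n" by (rule zdiv_mono1[OF _ assms(2)])
  then have "m \<le> \<xi> (Some x) div n" using assms(2) by simp
  also have "\<dots> \<le> pos_up_sum P \<xi> x div n - pos_up_sum' P \<xi> x div n"
    using div_add_div_le[OF assms(2), of "\<xi> (Some x)" "pos_up_sum' P \<xi> x"]
      pos_up_sum_eq_add[OF assms(1) \<open>x \<in> P\<close>, of \<xi>] by simp
  finally show "m \<le> \<eta> (Some x)" using \<eta> \<open>x \<in> P\<close> by simp
next
  fix C assume C: "pos_maximal_chain P C"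
  let ?sums = "\<lambda>\<zeta>. pos_chain_sum \<zeta> ` {C. pos_maximal_chain P C}"
  have fin: "finite (?sums \<zeta>)" for \<zeta>
    by (rule finite_imageI, rule finite_subset[of _ "Pow P"])
      (auto simp: assms(1) pos_maximal_chain_def pos_chain_def)
  obtain C0 where C0: "pos_maximal_chain P C0" "pos_chain_sum \<xi> C0 = Max (?sums \<xi>)"
    using Max_in[OF fin, of \<xi>] C by force
  have "Max (?sums \<xi>) + n * m \<le> \<xi> None" using assms(3) C0 unfolding pos_S_def by force
  then have "(Max (?sums \<xi>) + n * m) div n \<le> \<xi> None div n" by (rule zdiv_mono1[OF _ assms(2)])
  then have "Max (?sums \<xi>) div n + m \<le> \<xi> None div n" using assms(2) by simp
  moreover have "pos_chain_sum \<eta> C \<le> Max (?sums \<eta>)" using C fin by (intro Max_ge) auto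
  ultimately show "pos_chain_sum \<eta> C + m \<le> \<eta> None"
    using Max_pos_chain_sum_div[OF assms(1,2) \<eta>] \<eta>_None by simp
qed

theorem mainTheorem5:
  fixes P :: "'a::order set" and \<epsilon> n :: int and \<xi> :: "'a option \<Rightarrow> int"
  assumes "finite P"
    and "\<epsilon> \<in> {1, -1}"
    and "n \<ge> 2"
    and "\<xi> \<in> pos_S P (n * \<epsilon>)"
  defines "\<xi>1 \<equiv> (\<lambda>w. case w of
              None \<Rightarrow> \<xi> None div n
            | Some x \<Rightarrow> (if pos_maximal P x then \<xi> (Some x) div n
                         else pos_up_sum P \<xi> x div n - pos_up_sum' P \<xi> x div n))"
  shows "(\<forall>z\<in>P. pos_up_sum P \<xi>1 z = pos_up_sum P \<xi> z div n)
       \<and> Max (pos_chain_sum \<xi>1 ` {C. pos_maximal_chain P C})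
           = Max (pos_chain_sum \<xi> ` {C. pos_maximal_chain P C}) div n
       \<and> \<xi>1 \<in> pos_S P \<epsilon>"
proof -
  have "0 < n" using assms(3) by simp
  have \<xi>1_Some: "\<forall>x\<in>P. \<xi>1 (Some x) = pos_up_sum P \<xi> x div n - pos_up_sum' P \<xi> x div n"
    using pos_up_sum_eq_add[OF assms(1)] by (simp add: \<xi>1_def pos_up_sum'_maximal)
  have \<xi>1_None: "\<xi>1 None = \<xi> None div n" by (simp add: \<xi>1_def)
  show ?thesis
    using pos_up_sum_div[OF assms(1) \<open>0 < n\<close> \<xi>1_Some]
      Max_pos_chain_sum_div[OF assms(1) \<open>0 < n\<close> \<xi>1_Some]
      pos_S_div[OF assms(1) \<open>0 < n\<close> assms(4) \<xi>1_Some \<xi>1_None]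
    by blast
qed

end
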